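(* Let $R_0^*\in SO(3)$ and $x_1,\dots,x_\ell\in\mathbb{R}^3$. Then $$\lambda_{\min2}\Big(\sum_{i=1}^\ell P_i\Big)=\sum_{i=1}^\ell4\|x_i\|_2^2-\lambda_{\max}\Big(\sum_{i=1}^\ell4x_ix_i^\top\Big).$$
   Context: For $w=[w_1;w_2;w_3;w_4]\in\mathbb{S}^3$, $R(w)=\begin{bmatrix} w_1^2+w_2^2-w_3^2-w_4^2 & 2(w_2w_3-w_1w_4) & 2(w_2w_4+w_1w_3)\\ 2(w_2w_3+w_1w_4) & w_1^2+w_3^2-w_2^2-w_4^2 & 2(w_3w_4-w_1w_2)\\ 2(w_2w_4-w_1w_3) & 2(w_3w_4+w_1w_2) & w_1^2+w_4^2-w_2^2-w_3^2\end{bmatrix}\in SO(3)$. $P_i$ is the unique symmetric $4\times4$ matrix with $w^\top P_iw=\|R_0^*x_i-R(w)x_i\|_2^2$ for all $w\in\mathbb{S}^3$. $\lambda_{\min2}$ is the second smallest eigenvalue (counting multiplicity), $\lambda_{\max}$ the largest. *)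

theory Defs
  imports "HOL-Analysis.Analysis" "HOL-Computational_Algebra.Polynomial" "HOL-Library.Multiset"
begin

text \<open>Quaternion-to-rotation map R(w), components w_1..w_4 are w$1..w$4.\<close>
definition Rq :: "real^4 \<Rightarrow> real^3^3" where
  "Rq w = (let w1 = w$1; w2 = w$2; w3 = w$3; w4 = w$4 in
     vector [
       vector [w1^2+w2^2-w3^2-w4^2, 2*(w2*w3-w1*w4), 2*(w2*w4+w1*w3)],
       vector [2*(w2*w3+w1*w4), w1^2+w3^2-w2^2-w4^2, 2*(w3*w4-w1*w2)],
       vector [2*(w2*w4-w1*w3), 2*(w3*w4+w1*w2), w1^2+w4^2-w2^2-w3^2]])"

definition Pmat :: "real^3^3 \<Rightarrow> real^3 \<Rightarrow> real^4^4" where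
  "Pmat R0 x = (THE P. transpose P = P \<and>
      (\<forall>w::real^4. norm w = 1 \<longrightarrow> w \<bullet> (P *v w) = (norm (R0 *v x - Rq w *v x))^2))"

definition charpoly :: "real^'n^'n \<Rightarrow> real poly" where
  "charpoly A = det (\<chi> i j. (if i = j then [:0, 1:] else 0) - [:A$i$j:])"

definition eigs_sorted :: "real^'n^'n \<Rightarrow> real list" where
  "eigs_sorted A = sorted_list_of_multiset (proots (charpoly A))"

definition lambda_min2 :: "real^'n^'n \<Rightarrow> real" where
  "lambda_min2 A = eigs_sorted A ! 1"

definition lambda_max :: "real^'n^'n \<Rightarrow> real" where
  "lambda_max A = last (eigs_sorted A)"

definition outer :: "real^'n \<Rightarrow> real^'n^'n" where
  "outer x = (\<chi> i j. x$i * x$j)"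

end

theory Submission
  imports Defs
begin

text \<open>
  Expanding the square, \<open>\<parallel>R\<^sub>0 x - R(w) x\<parallel>\<^sup>2 = 2\<parallel>x\<parallel>\<^sup>2 - 2 (R\<^sub>0 x)\<^sup>T R(w) x\<close> on the unit sphere,
  and the bilinear term is the quadratic form of Davenport's symmetric matrix \<open>K(B)\<close> with
  \<open>B = R\<^sub>0 x x\<^sup>T\<close>. Summing, \<open>\<Sum>P\<^sub>i = 2 tr(M) I - 2 K(R\<^sub>0 M)\<close> with \<open>M = \<Sum> x\<^sub>i x\<^sub>i\<^sup>T\<close>.
  The characteristic polynomial of \<open>K(B)\<close> depends only on \<open>B\<^sup>T B\<close> and \<open>det B\<close>, so the
  rotation \<open>R\<^sub>0\<close> can be dropped; for symmetric \<open>M\<close> the matrix \<open>K(M)\<close> is block diagonal with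
  blocks \<open>tr M\<close> and \<open>2M - tr(M) I\<close>. Hence the eigenvalues of \<open>\<Sum>P\<^sub>i\<close> are \<open>0\<close> together with
  \<open>4 tr M - \<nu>\<close> for the eigenvalues \<open>\<nu>\<close> of \<open>4M\<close>, and \<open>\<nu> \<le> 4 tr M\<close> by Cauchy-Schwarz.
  So \<open>0\<close> is the smallest eigenvalue and the second smallest is \<open>4 tr M - \<lambda>\<^sub>m\<^sub>a\<^sub>x(4M)\<close>.
\<close>

lemma det_4:
  "det (A::'a::comm_ring_1^4^4) =
      A$1$1 * A$2$2 * A$3$3 * A$4$4 - A$1$1 * A$2$2 * A$3$4 * A$4$3
    - A$1$1 * A$2$3 * A$3$2 * A$4$4 + A$1$1 * A$2$3 * A$3$4 * A$4$2
    + A$1$1 * A$2$4 * A$3$2 * A$4$3 - A$1$1 * A$2$4 * A$3$3 * A$4$2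
    - A$1$2 * A$2$1 * A$3$3 * A$4$4 + A$1$2 * A$2$1 * A$3$4 * A$4$3
    + A$1$2 * A$2$3 * A$3$1 * A$4$4 - A$1$2 * A$2$3 * A$3$4 * A$4$1
    - A$1$2 * A$2$4 * A$3$1 * A$4$3 + A$1$2 * A$2$4 * A$3$3 * A$4$1
    + A$1$3 * A$2$1 * A$3$2 * A$4$4 - A$1$3 * A$2$1 * A$3$4 * A$4$2
    - A$1$3 * A$2$2 * A$3$1 * A$4$4 + A$1$3 * A$2$2 * A$3$4 * A$4$1
    + A$1$3 * A$2$4 * A$3$1 * A$4$2 - A$1$3 * A$2$4 * A$3$2 * A$4$1
    - A$1$4 * A$2$1 * A$3$2 * A$4$3 + A$1$4 * A$2$1 * A$3$3 * A$4$2
    + A$1$4 * A$2$2 * A$3$1 * A$4$3 - A$1$4 * A$2$2 * A$3$3 * A$4$1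
    - A$1$4 * A$2$3 * A$3$1 * A$4$2 + A$1$4 * A$2$3 * A$3$2 * A$4$1"
proof -
  have f1: "finite {2::4, 3, 4}" "1 \<notin> {2::4, 3, 4}" by auto
  have f2: "finite {3::4, 4}" "2 \<notin> {3::4, 4}" by auto
  have f3: "finite {4::4}" "3 \<notin> {4::4}" by auto
  show ?thesis
    unfolding det_def UNIV_4
    unfolding sum_over_permutations_insert[OF f1] sum_over_permutations_insert[OF f2]
      sum_over_permutations_insert[OF f3] permutes_sing
    by (simp add: sign_swap_id permutation_swap_id permutation_compose sign_compose sign_id
        swap_id_eq algebra_simps)
qed

lemma vector_4 [simp]:
  "(vector [a, b, c, d] :: 'a::zero^4) $ 1 = a"
  "(vector [a, b, c, d] :: 'a::zero^4) $ 2 = b"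
  "(vector [a, b, c, d] :: 'a::zero^4) $ 3 = c"
  "(vector [a, b, c, d] :: 'a::zero^4) $ 4 = d"
  unfolding vector_def by auto

lemma det_scaleR: "det (c *\<^sub>R A) = c ^ CARD('n) * det (A :: real^'n^'n)"
  unfolding det_def by (simp add: prod.distrib sum_distrib_left mult_ac)

lemma transpose_diff: "transpose (A - B) = transpose A - transpose (B :: 'a::ab_group_add^'n^'m)"
  by (simp add: transpose_def vec_eq_iff)

lemma matrix_mul_sum: "(R :: real^'n^'m) ** (\<Sum>i\<in>I. B i) = (\<Sum>i\<in>I. R ** B i)"
  by (simp add: vec_eq_iff matrix_matrix_mult_def sum_distrib_left sum.swap[of _ I])

lemma sum_matrix_vector_mult: "(\<Sum>i\<in>I. A i) *v v = (\<Sum>i\<in>I. A i *v (v :: real^'n))"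
  by (simp add: vec_eq_iff matrix_vector_mult_def sum_distrib_right sum.swap[of _ I])

lemma matrix_vector_mult_mat: "mat c *v v = c *\<^sub>R (v :: real^'n)"
  by (simp add: vec_eq_iff matrix_vector_mult_def mat_def if_distrib[of "\<lambda>a. a * _"]
      cong: if_cong)

lemma outer_mult_vector: "outer x *v v = (x \<bullet> v) *\<^sub>R x"
  by (simp add: vec_eq_iff outer_def matrix_vector_mult_def inner_vec_def sum_distrib_left
      mult_ac)

lemma outer_scaleR: "outer (c *\<^sub>R x) = c\<^sup>2 *\<^sub>R outer x"
  by (simp add: vec_eq_iff outer_def power2_eq_square)

lemma frobenius_inner_matrix_mul_outer:
  "(\<Sum>j\<in>UNIV. \<Sum>k\<in>UNIV. (R ** outer x)$j$k * C$j$k) = (R *v x) \<bullet> (C *v x)"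
proof -
  have "(R ** outer x)$j$k = (R *v x)$j * x$k" for j k
    by (simp add: matrix_matrix_mult_def matrix_vector_mult_def outer_def
        sum_distrib_left sum_distrib_right mult_ac)
  then have "(\<Sum>j\<in>UNIV. \<Sum>k\<in>UNIV. (R ** outer x)$j$k * C$j$k)
      = (\<Sum>j\<in>UNIV. (R *v x)$j * (C *v x)$j)"
    by (simp add: matrix_vector_mult_def[of C] sum_distrib_left mult_ac)
  then show ?thesis
    by (simp add: inner_vec_def)
qed

lemma symmetric_matrix_eq_if_quadratic_forms_eq:
  fixes P Q :: "real^'n^'n"
  assumes "transpose P = P" "transpose Q = Q"
    and quadratic: "\<And>w. norm w = 1 \<Longrightarrow> w \<bullet> (P *v w) = w \<bullet> (Q *v w)"
  shows "P = Q"
proof -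
  define D where "D = P - Q"
  have symmetric: "u \<bullet> (D *v v) = v \<bullet> (D *v u)" for u v
    using assms(1,2) unfolding D_def
    by (metis dot_lmul_matrix inner_commute transpose_diff transpose_matrix_vector)
  have unit: "w \<bullet> (D *v w) = 0" if "norm w = 1" for w
    using quadratic[OF that] by (simp add: D_def matrix_vector_mult_diff_rdistrib inner_diff_right)
  have form: "w \<bullet> (D *v w) = 0" for w
  proof (cases "w = 0")
    case False
    then have "(w /\<^sub>R norm w) \<bullet> (D *v (w /\<^sub>R norm w)) = 0"
      by (intro unit) simp
    with False show ?thesis
      by (simp add: matrix_vector_mult_scaleR)
  qed simp
  have "u \<bullet> (D *v v) = 0" for u v
    using form[of "u + v"] form[of u] form[of v] symmetric[of u v]
    by (simp add: matrix_vector_right_distrib inner_add_left inner_add_right)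
  then have "D *v v = 0" for v
    using inner_eq_zero_iff by blast
  then show ?thesis
    by (simp add: D_def matrix_eq matrix_vector_mult_diff_rdistrib)
qed

lemma eigenvalue_sum_outer_le:
  fixes x :: "'i \<Rightarrow> real^'n"
  assumes eigen: "(\<Sum>i\<in>I. outer (x i)) *v v = \<nu> *\<^sub>R v" and "v \<noteq> 0"
  shows "\<nu> \<le> (\<Sum>i\<in>I. (norm (x i))\<^sup>2)"
proof -
  have "\<nu> * (v \<bullet> v) = v \<bullet> ((\<Sum>i\<in>I. outer (x i)) *v v)"
    using eigen by simp
  also have "\<dots> = (\<Sum>i\<in>I. (x i \<bullet> v)\<^sup>2)"
    by (simp add: sum_matrix_vector_mult inner_sum_right outer_mult_vector power2_eq_square
        inner_commute)
  also have "\<dots> \<le> (\<Sum>i\<in>I. (norm (x i))\<^sup>2 * (v \<bullet> v))"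
    by (intro sum_mono) (simp add: Cauchy_Schwarz_ineq power2_norm_eq_inner)
  also have "\<dots> = (\<Sum>i\<in>I. (norm (x i))\<^sup>2) * (v \<bullet> v)"
    by (simp add: sum_distrib_right)
  finally show ?thesis
    using \<open>v \<noteq> 0\<close> by simp
qed

lemma poly_charpoly: "poly (charpoly A) t = det (mat t - A)"
  unfolding charpoly_def det_def
  by (auto simp: poly_sum poly_prod mat_def intro!: sum.cong prod.cong)

lemma charpoly_root_imp_eigenvector:
  fixes A :: "real^'n^'n"
  assumes "poly (charpoly A) \<nu> = 0"
  obtains v where "v \<noteq> 0" "A *v v = \<nu> *\<^sub>R v"
proof -
  have "\<not> invertible (mat \<nu> - A)"
    using assms by (simp add: poly_charpoly invertible_det_nz)
  then obtain v where "v \<noteq> 0" "(mat \<nu> - A) *v v = 0"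
    using invertible_left_inverse matrix_left_invertible_ker by blast
  with that show ?thesis
    by (simp add: matrix_vector_mult_diff_rdistrib matrix_vector_mult_mat)
qed

lemma degree_charpoly_3: "degree (charpoly (A :: real^3^3)) = 3"
proof -
  have "charpoly A = [:- det A, A$1$1*A$2$2 + A$1$1*A$3$3 + A$2$2*A$3$3
                       - A$1$2*A$2$1 - A$1$3*A$3$1 - A$2$3*A$3$2, - trace A, 1:]"
    by (rule poly_ext) (simp add: poly_charpoly det_3 trace_def sum_3 mat_def; algebra)
  then show ?thesis by simp
qed

lemma odd_degree_poly_has_root:
  fixes p :: "real poly"
  assumes "odd (degree p)"
  shows "\<exists>x. poly p x = 0"
proof -
  have root_if_pos: "\<exists>x. poly p x = 0"
    if odd: "odd (degree p)" and lc: "lead_coeff p > 0" for p :: "real poly"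
  proof -
    define r where "r = - pcompose p [:0, -1:]"
    have "lead_coeff r = lead_coeff p"
      using odd by (simp add: r_def lead_coeff_comp)
    then obtain a b where a: "\<And>x. x \<ge> a \<Longrightarrow> poly p x \<ge> lead_coeff p"
      and b: "\<And>x. x \<ge> b \<Longrightarrow> poly r x \<ge> lead_coeff p"
      using poly_pinfty_gt_lc[of p] poly_pinfty_gt_lc[of r] lc by auto
    define x where "x = \<bar>a\<bar> + \<bar>b\<bar> + 1"
    have "a \<le> x" "b \<le> x"
      by (auto simp: x_def abs_if)
    then have "poly p (- x) < 0" "0 < poly p x"
      using a[of x] b[of x] lc by (auto simp: r_def poly_pcompose)
    moreover have "- x < x"
      by (simp add: x_def)
    ultimately show ?thesis
      using poly_IVT_pos[of "- x" x p] by blast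
  qed
  have "p \<noteq> 0" using assms by auto
  then consider "lead_coeff p > 0" | "lead_coeff (- p) > 0"
    by (metis lead_coeff_minus leading_coeff_0_iff linorder_neqE_linordered_idom neg_0_less_iff_less)
  then show ?thesis
    using root_if_pos[of p] root_if_pos[of "- p"] assms by cases auto
qed

lemma hd_sorted_list_of_multiset:
  "M \<noteq> {#} \<Longrightarrow> hd (sorted_list_of_multiset M) = Min_mset M"
proof -
  assume "M \<noteq> {#}"
  then obtain y ys where ys: "sorted_list_of_multiset M = y # ys"
    by (metis list.exhaust mset_sorted_list_of_multiset mset_zero_iff)
  then have "set_mset M = insert y (set ys)" "\<forall>z \<in> set ys. y \<le> z"
    using sorted_sorted_list_of_multiset[of M]
    by (metis list.simps(15) set_sorted_list_of_multiset, simp)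
  with ys show ?thesis
    by (simp add: Min_insert2)
qed

lemma last_sorted_list_of_multiset:
  "M \<noteq> {#} \<Longrightarrow> last (sorted_list_of_multiset M) = Max_mset M"
proof -
  assume "M \<noteq> {#}"
  then have ne: "sorted_list_of_multiset M \<noteq> []"
    by (metis mset_sorted_list_of_multiset mset_zero_iff)
  define ys where "ys = butlast (sorted_list_of_multiset M)"
  have ys: "sorted_list_of_multiset M = ys @ [last (sorted_list_of_multiset M)]"
    using ne by (simp add: ys_def)
  then have "set_mset M = insert (last (sorted_list_of_multiset M)) (set ys)"
    by (metis Un_insert_right empty_set list.simps(15) set_append set_sorted_list_of_multiset
        sup_bot.right_neutral)
  moreover have "\<forall>z \<in> set ys. z \<le> last (sorted_list_of_multiset M)"
    using sorted_sorted_list_of_multiset[of M] ys by (metis sorted_append list.set_intros(1))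
  ultimately show ?thesis
    by (simp add: Max_insert2)
qed

lemma Min_diff_image:
  fixes X :: "real set"
  assumes "finite X" "X \<noteq> {}"
  shows "Min ((\<lambda>\<nu>. c - \<nu>) ` X) = c - Max X"
proof -
  have "c - Max X \<in> (\<lambda>\<nu>. c - \<nu>) ` X"
    using Max_in[OF assms] by blast
  with assms show ?thesis
    by (intro Min_eqI) auto
qed

lemma sorted_proots_nth_1_reflect:
  fixes p q :: "real poly"
  assumes p: "\<And>t. poly p t = - t * poly q (c - t)" and "q \<noteq> 0"
    and "\<exists>\<nu>. poly q \<nu> = 0" and le: "\<And>\<nu>. poly q \<nu> = 0 \<Longrightarrow> \<nu> \<le> c"
  shows "sorted_list_of_multiset (proots p) ! 1 = c - last (sorted_list_of_multiset (proots q))"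
proof -
  define r where "r = pcompose q [:c, -1:]"
  have poly_r: "poly r t = poly q (c - t)" for t
    by (simp add: r_def poly_pcompose)
  have "r \<noteq> 0"
    using \<open>q \<noteq> 0\<close> by (simp add: r_def pcompose_eq_0_iff)
  have p_eq: "p = - ([:0, 1:] * r)"
    by (rule poly_ext) (simp add: p poly_r)
  have "proots p = proots [:0, 1:] + proots r"
    unfolding p_eq proots_uminus by (rule proots_mult) (use \<open>r \<noteq> 0\<close> in simp_all)
  then have roots_p: "proots p = add_mset 0 (proots r)"
    using proots_linear_factor[of "0 :: real"] by simp
  have roots_r: "set_mset (proots r) = (\<lambda>\<nu>. c - \<nu>) ` set_mset (proots q)"
    using \<open>r \<noteq> 0\<close> \<open>q \<noteq> 0\<close> by (force simp: poly_r)
  obtain \<nu> where "poly q \<nu> = 0"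
    using assms(3) by blast
  with \<open>q \<noteq> 0\<close> have "\<nu> \<in># proots q"
    by simp
  then have "proots q \<noteq> {#}"
    by auto
  then have "proots r \<noteq> {#}"
    using roots_r by auto
  have "\<forall>y \<in> set (sorted_list_of_multiset (proots r)). 0 \<le> y"
    using roots_r \<open>q \<noteq> 0\<close> le by auto
  then have "sorted_list_of_multiset (proots p) = 0 # sorted_list_of_multiset (proots r)"
    by (simp add: roots_p insort_is_Cons)
  moreover have "sorted_list_of_multiset (proots r) \<noteq> []"
    using \<open>proots r \<noteq> {#}\<close> by (metis mset_sorted_list_of_multiset mset_zero_iff)
  ultimately have "sorted_list_of_multiset (proots p) ! 1 = hd (sorted_list_of_multiset (proots r))"
    by (simp add: hd_conv_nth)
  also have "\<dots> = c - Max_mset (proots q)"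
    using \<open>proots r \<noteq> {#}\<close> \<open>proots q \<noteq> {#}\<close>
    by (simp add: hd_sorted_list_of_multiset roots_r Min_diff_image)
  also have "\<dots> = c - last (sorted_list_of_multiset (proots q))"
    using \<open>proots q \<noteq> {#}\<close> by (simp add: last_sorted_list_of_multiset)
  finally show ?thesis .
qed

text \<open>Davenport's \<open>K\<close>-matrix from attitude estimation (the q-method).\<close>
definition davenport_matrix :: "real^3^3 \<Rightarrow> real^4^4" where
  "davenport_matrix B = vector [
     vector [B$1$1 + B$2$2 + B$3$3, B$3$2 - B$2$3, B$1$3 - B$3$1, B$2$1 - B$1$2],
     vector [B$3$2 - B$2$3, B$1$1 - B$2$2 - B$3$3, B$1$2 + B$2$1, B$1$3 + B$3$1],
     vector [B$1$3 - B$3$1, B$1$2 + B$2$1, - B$1$1 + B$2$2 - B$3$3, B$2$3 + B$3$2],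
     vector [B$2$1 - B$1$2, B$1$3 + B$3$1, B$2$3 + B$3$2, - B$1$1 - B$2$2 + B$3$3]]"

lemma transpose_davenport_matrix: "transpose (davenport_matrix B) = davenport_matrix B"
  by (simp add: vec_eq_iff forall_4 transpose_def davenport_matrix_def)

lemma linear_davenport_matrix: "linear davenport_matrix"
  by (rule linearI) (simp_all add: davenport_matrix_def vec_eq_iff forall_4 algebra_simps)

lemma inner_davenport_matrix:
  "w \<bullet> (davenport_matrix B *v w) = (\<Sum>j\<in>UNIV. \<Sum>k\<in>UNIV. B$j$k * Rq w $j$k)"
  by (simp add: inner_vec_def sum_4 sum_3 matrix_vector_mult_def davenport_matrix_def Rq_def Let_def)
    algebra

lemma inner_Rq_mult_self: "(Rq w *v x) \<bullet> (Rq w *v x) = (w \<bullet> w)\<^sup>2 * (x \<bullet> x)"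
  by (simp add: inner_vec_def sum_4 sum_3 matrix_vector_mult_def Rq_def Let_def) algebra

lemma det_davenport_matrix:
  fixes B :: "real^3^3"
  defines "G \<equiv> transpose B ** B"
  shows "det (mat u - davenport_matrix B) =
     u^4 - 2 * trace G * u\<^sup>2 - 8 * det B * u + 2 * trace (G ** G) - (trace G)\<^sup>2"
  unfolding G_def
  by (simp add: det_4 det_3 davenport_matrix_def mat_def trace_def matrix_matrix_mult_def
      sum_3 transpose_def) algebra

lemma det_davenport_matrix_rotation:
  assumes "rotation_matrix R"
  shows "det (mat u - davenport_matrix (R ** B)) = det (mat u - davenport_matrix B)"
proof -
  have "transpose (R ** B) ** (R ** B) = transpose B ** (transpose R ** R) ** B"
    by (simp add: matrix_transpose_mul matrix_mul_assoc)
  also have "\<dots> = transpose B ** B"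
    using assms by (simp add: rotation_matrix_def orthogonal_matrix_def)
  moreover have "det (R ** B) = det B"
    using assms by (simp add: rotation_matrix_def det_mul)
  ultimately show ?thesis
    by (simp add: det_davenport_matrix)
qed

lemma det_davenport_matrix_symmetric:
  fixes M :: "real^3^3"
  assumes "transpose M = M"
  shows "det (mat u - davenport_matrix M) = (u - trace M) * det (mat (u + trace M) - 2 *\<^sub>R M)"
proof -
  have sym: "M$j$i = M$i$j" for i j
    using arg_cong[OF assms, of "\<lambda>A. A$i$j"] by (simp add: transpose_def)
  show ?thesis
    unfolding det_davenport_matrix assms
    by (simp add: det_3 mat_def trace_def matrix_matrix_mult_def sum_3,
        simp add: sym[of 1 2] sym[of 1 3] sym[of 2 3]) algebra
qed

lemma Pmat_eq:
  assumes "orthogonal_matrix R0"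
  shows "Pmat R0 x = (2 * (norm x)\<^sup>2) *\<^sub>R mat 1 - 2 *\<^sub>R davenport_matrix (R0 ** outer x)"
    (is "_ = ?P")
proof -
  have "orthogonal_transformation ((*v) R0)"
    using assms by (simp add: orthogonal_transformation_matrix matrix_vector_mul_linear)
  then have norm_R0: "norm (R0 *v x) = norm x"
    by (rule orthogonal_transformation_norm)
  have "w \<bullet> (?P *v w) = (norm (R0 *v x - Rq w *v x))\<^sup>2" if "norm w = 1" for w
  proof -
    have w: "w \<bullet> w = 1"
      using that by (simp add: norm_eq_1)
    have "(norm (R0 *v x - Rq w *v x))\<^sup>2
        = (norm (R0 *v x))\<^sup>2 - 2 * ((R0 *v x) \<bullet> (Rq w *v x)) + (Rq w *v x) \<bullet> (Rq w *v x)"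
      by (simp add: power2_norm_eq_inner inner_diff_left inner_diff_right inner_commute)
    also have "\<dots> = 2 * (norm x)\<^sup>2 - 2 * ((R0 *v x) \<bullet> (Rq w *v x))"
      by (simp add: norm_R0 inner_Rq_mult_self w power2_norm_eq_inner)
    also have "\<dots> = w \<bullet> (?P *v w)"
      by (simp add: matrix_vector_mult_diff_rdistrib inner_diff_right inner_davenport_matrix
          frobenius_inner_matrix_mul_outer w flip: scaleR_matrix_vector_assoc)
    finally show ?thesis ..
  qed
  moreover have "transpose ?P = ?P"
    by (simp add: transpose_diff transpose_scalar transpose_davenport_matrix)
  ultimately show ?thesis
    unfolding Pmat_def
    by (intro the_equality) (auto intro: symmetric_matrix_eq_if_quadratic_forms_eq)
qed

lemma poly_charpoly_sum_Pmat:
  fixes x :: "'i \<Rightarrow> real^3"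
  assumes "rotation_matrix R0"
  shows "poly (charpoly (\<Sum>i\<in>I. Pmat R0 (x i))) t
    = - t * poly (charpoly (\<Sum>i\<in>I. 4 *\<^sub>R outer (x i))) ((\<Sum>i\<in>I. 4 * (norm (x i))\<^sup>2) - t)"
proof -
  define M where "M = (\<Sum>i\<in>I. outer (x i))"
  define s where "s = (\<Sum>i\<in>I. (norm (x i))\<^sup>2)"
  have symmetric: "transpose M = M"
    by (simp add: M_def vec_eq_iff transpose_def outer_def mult.commute)
  have "trace M = (\<Sum>i\<in>I. x i \<bullet> x i)"
    by (simp add: M_def trace_def outer_def inner_vec_def sum.swap[of _ UNIV])
  then have "trace M = s"
    by (simp add: s_def power2_norm_eq_inner)
  have sum_P: "(\<Sum>i\<in>I. Pmat R0 (x i)) = (2 * s) *\<^sub>R mat 1 - 2 *\<^sub>R davenport_matrix (R0 ** M)"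
    using assms
    by (simp add: Pmat_eq rotation_matrix_def sum_subtractf scaleR_sum_left scaleR_sum_right
        linear_sum[OF linear_davenport_matrix] matrix_mul_sum M_def s_def sum_distrib_left)
  have "mat (4 * s - t) - 4 *\<^sub>R M = 2 *\<^sub>R (mat (2 * s - t / 2) - 2 *\<^sub>R M)"
    by (simp add: vec_eq_iff mat_def)
  then have scale_4M: "det (mat (4 * s - t) - 4 *\<^sub>R M) = 8 * det (mat (2 * s - t / 2) - 2 *\<^sub>R M)"
    by (simp add: det_scaleR)
  have "s - t / 2 - trace M = - t / 2" "s - t / 2 + trace M = 2 * s - t / 2"
    using \<open>trace M = s\<close> by simp_all
  note K_M = det_davenport_matrix_symmetric[OF symmetric, of "s - t / 2", unfolded this]
  have "poly (charpoly (\<Sum>i\<in>I. Pmat R0 (x i))) t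
      = det ((-2) *\<^sub>R (mat (s - t / 2) - davenport_matrix (R0 ** M)))"
    by (simp add: poly_charpoly sum_P) (intro arg_cong[where f = det]; simp add: vec_eq_iff mat_def)
  also have "\<dots> = 16 * det (mat (s - t / 2) - davenport_matrix M)"
    using det_scaleR[of "-2" "mat (s - t / 2) - davenport_matrix (R0 ** M)"] assms
    by (simp add: det_davenport_matrix_rotation)
  also have "\<dots> = - t * det (mat (4 * s - t) - 4 *\<^sub>R M)"
    by (simp add: K_M scale_4M)
  also have "\<dots> = - t * poly (charpoly (\<Sum>i\<in>I. 4 *\<^sub>R outer (x i))) ((\<Sum>i\<in>I. 4 * (norm (x i))\<^sup>2) - t)"
    by (simp add: poly_charpoly M_def s_def scaleR_sum_right sum_distrib_left)
  finally show ?thesis .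
qed

theorem lemma4p5:
  fixes R0 :: "real^3^3" and x :: "nat \<Rightarrow> real^3" and l :: nat
  assumes "rotation_matrix R0"
  shows "lambda_min2 (\<Sum>i=1..l. Pmat R0 (x i))
         = (\<Sum>i=1..l. 4 * (norm (x i))^2) - lambda_max (\<Sum>i=1..l. 4 *\<^sub>R outer (x i))"
proof -
  let ?A = "\<Sum>i=1..l. 4 *\<^sub>R outer (x i)"
  let ?S = "\<Sum>i=1..l. 4 * (norm (x i))^2"
  have "degree (charpoly ?A) = 3"
    by (rule degree_charpoly_3)
  then have "charpoly ?A \<noteq> 0" "\<exists>\<nu>. poly (charpoly ?A) \<nu> = 0"
    using odd_degree_poly_has_root by auto
  moreover have "\<nu> \<le> ?S" if root: "poly (charpoly ?A) \<nu> = 0" for \<nu>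
  proof -
    obtain v where v: "v \<noteq> 0" "?A *v v = \<nu> *\<^sub>R v"
      using charpoly_root_imp_eigenvector[OF root] by blast
    have "?A = (\<Sum>i=1..l. outer (2 *\<^sub>R x i))"
      by (simp add: outer_scaleR)
    with v have "\<nu> \<le> (\<Sum>i=1..l. (norm (2 *\<^sub>R x i))\<^sup>2)"
      by (intro eigenvalue_sum_outer_le[where v = v]) auto
    then show ?thesis
      by (simp add: power_mult_distrib)
  qed
  ultimately show ?thesis
    unfolding lambda_min2_def lambda_max_def eigs_sorted_def
    by (intro sorted_proots_nth_1_reflect poly_charpoly_sum_Pmat assms) auto
qed

end
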